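(* Let $f\colon X\to Y$ be a continuous map between path-connected spaces such that $f_*\colon\pi_1(X)\to\pi_1(Y)$ is an isomorphism. Then $\mathsf{TC}^{\mathcal D}(X)\le\mathsf{TC}^{\mathcal D}(Y)$. In particular $\mathsf{TC}^{\mathcal D}$ is a homotopy invariant.
   Context: For a path-connected space $Z$ with $\pi=\pi_1(Z)$, $\mathsf{TC}^{\mathcal D}(Z)$ is the least $k$ such that $Z\times Z=U_0\cup\dots\cup U_k$ with $U_i$ open and such that for every $i$ and every basepoint $u\in U_i$ the homomorphism $\pi_1(U_i,u)\to\pi_1(Z\times Z,u)\cong\pi\times\pi$ induced by inclusion takes values in a subgroup conjugate to the diagonal $\Delta\subset\pi\times\pi$. *)

theory Defs
  imports "HOL-Analysis.Analysis" "HOL-Library.Extended_Nat"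
begin

definition loopin :: "'a topology \<Rightarrow> 'a \<Rightarrow> (real \<Rightarrow> 'a) \<Rightarrow> bool" where
  "loopin X a g \<longleftrightarrow> pathin X g \<and> g 0 = a \<and> g 1 = a"

definition path_homotopic :: "'a topology \<Rightarrow> (real \<Rightarrow> 'a) \<Rightarrow> (real \<Rightarrow> 'a) \<Rightarrow> bool" where
  "path_homotopic X p q \<longleftrightarrow>
     homotopic_with (\<lambda>r. r 0 = p 0 \<and> r 1 = p 1) (top_of_set {0..1}) X p q"

text \<open>The induced map \<open>f_* : \<pi>\<^sub>1(X,x0) \<rightarrow> \<pi>\<^sub>1(Y,f x0)\<close>, \<open>[g] \<mapsto> [f \<circ> g]\<close>, is a bijection
  (hence an isomorphism of groups, being a homomorphism).\<close>
definition pi1_iso_induced :: "'a topology \<Rightarrow> 'b topology \<Rightarrow> ('a \<Rightarrow> 'b) \<Rightarrow> 'a \<Rightarrow> bool" where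
  "pi1_iso_induced X Y f x0 \<longleftrightarrow>
     (\<forall>p q. loopin X x0 p \<and> loopin X x0 q \<and> path_homotopic Y (f \<circ> p) (f \<circ> q)
            \<longrightarrow> path_homotopic X p q) \<and>
     (\<forall>g. loopin Y (f x0) g \<longrightarrow> (\<exists>p. loopin X x0 p \<and> path_homotopic Y (f \<circ> p) g))"

text \<open>Reversal and concatenation of paths in an arbitrary (abstract) space; same formulas as
  the library's \<open>reversepath\<close> and \<open>+++\<close>, which are restricted to type-class topologies.\<close>
definition rev_path :: "(real \<Rightarrow> 'a) \<Rightarrow> real \<Rightarrow> 'a" where
  "rev_path g = (\<lambda>x. g (1 - x))"

definition join_path :: "(real \<Rightarrow> 'a) \<Rightarrow> (real \<Rightarrow> 'a) \<Rightarrow> real \<Rightarrow> 'a" where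
  "join_path g1 g2 = (\<lambda>x. if x \<le> 1/2 then g1 (2 * x) else g2 (2 * x - 1))"

text \<open>An open set \<open>U \<subseteq> Z \<times> Z\<close> is \<open>\<D>\<close>-good if for every \<open>u = (a,b) \<in> U\<close> the image of
  \<open>\<pi>\<^sub>1(U,u) \<rightarrow> \<pi>\<^sub>1(Z \<times> Z,u) \<cong> \<pi>\<^sub>1(Z,a) \<times> \<pi>\<^sub>1(Z,b)\<close> lies in a conjugate of the diagonal.
  The conjugates of the diagonal are exactly the subgroups
  \<open>{([\<alpha>],[p\<^sup>-\<^sup>1 \<alpha> p]) | \<alpha> loop at a}\<close> for \<open>p\<close> a path from \<open>a\<close> to \<open>b\<close>.\<close>
definition diag_good :: "'a topology \<Rightarrow> ('a \<times> 'a) set \<Rightarrow> bool" where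
  "diag_good Z U \<longleftrightarrow>
     (\<forall>u\<in>U. \<exists>p. pathin Z p \<and> p 0 = fst u \<and> p 1 = snd u \<and>
        (\<forall>\<gamma>. loopin (subtopology (prod_topology Z Z) U) u \<gamma> \<longrightarrow>
              path_homotopic Z (snd \<circ> \<gamma>) (join_path (rev_path p) (join_path (fst \<circ> \<gamma>) p))))"

text \<open>\<open>TC\<^sup>\<D>(Z)\<close>: least \<open>k\<close> such that \<open>Z \<times> Z\<close> is covered by \<open>k+1\<close> open \<open>\<D>\<close>-good sets;
  \<open>\<infinity>\<close> if no such \<open>k\<close> exists.\<close>
definition TCD :: "'a topology \<Rightarrow> enat" where
  "TCD Z = (INF k \<in> {k::nat. \<exists>U :: nat \<Rightarrow> ('a \<times> 'a) set.
       (\<forall>i\<le>k. openin (prod_topology Z Z) (U i) \<and> diag_good Z (U i)) \<and>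
       (\<Union>i\<le>k. U i) = topspace (prod_topology Z Z)}. enat k)"

end

(*
  Pulling back an open cover of Y \<times> Y along f \<times> f gives an open cover of X \<times> X, so it suffices
  that preimages of D-good sets are D-good. As X is path connected, f\<^sub>* is bijective at every
  basepoint (conjugate by a path from x0), and every path q in Y from f a to f b is homotopic to
  f \<circ> p for some path p in X from a to b. For a loop \<gamma> in the preimage of a D-good set V,
  f \<circ> \<gamma> is a loop in V, so f \<circ> \<gamma>\<^sub>2 \<simeq> q\<^sup>-\<^sup>1 (f \<circ> \<gamma>\<^sub>1) q \<simeq> f \<circ> (p\<^sup>-\<^sup>1 \<gamma>\<^sub>1 p),
  and injectivity of f\<^sub>* at b gives \<gamma>\<^sub>2 \<simeq> p\<^sup>-\<^sup>1 \<gamma>\<^sub>1 p.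

  A homotopy equivalence induces bijections of fundamental groups because a homotopy
  H : g \<circ> f \<simeq> id gives \<alpha> \<simeq> c\<^sup>-\<^sup>1 (g \<circ> f \<circ> \<alpha>) c, where c is the track of the
  basepoint under H.
*)

theory Submission
  imports Defs
begin

lemma path_homotopic_imp_pathin:
  assumes "path_homotopic X p q"
  shows "pathin X p \<and> pathin X q \<and> q 0 = p 0 \<and> q 1 = p 1"
  using homotopic_with_imp_continuous_maps[OF assms[unfolded path_homotopic_def]]
        homotopic_with_imp_property[OF assms[unfolded path_homotopic_def]]
  by (simp add: pathin_def)

lemma path_homotopic_refl: "pathin X p \<Longrightarrow> path_homotopic X p p"
  by (simp add: path_homotopic_def pathin_def)

lemma path_homotopic_sym:
  assumes "path_homotopic X p q"
  shows "path_homotopic X q p"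
proof -
  have "q 0 = p 0" "q 1 = p 1"
    using path_homotopic_imp_pathin[OF assms] by auto
  with homotopic_with_symD[OF assms[unfolded path_homotopic_def]] show ?thesis
    by (simp add: path_homotopic_def)
qed

lemma path_homotopic_trans [trans]:
  assumes "path_homotopic X p q" "path_homotopic X q r"
  shows "path_homotopic X p r"
proof -
  have ends: "q 0 = p 0" "q 1 = p 1"
    using path_homotopic_imp_pathin[OF assms(1)] by auto
  show ?thesis
    using assms unfolding path_homotopic_def ends by (rule homotopic_with_trans)
qed

lemma path_homotopic_cong:
  assumes "path_homotopic X p q"
    and "\<And>t. t \<in> {0..1} \<Longrightarrow> p' t = p t" "\<And>t. t \<in> {0..1} \<Longrightarrow> q' t = q t"
  shows "path_homotopic X p' q'"
proof -
  have "homotopic_with (\<lambda>r. r 0 = p 0 \<and> r 1 = p 1) (top_of_set {0..1}) X p' q'"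
    by (rule homotopic_with_eq[OF assms(1)[unfolded path_homotopic_def]]) (simp_all add: assms(2,3))
  moreover have "p' 0 = p 0" "p' 1 = p 1" using assms(2) by auto
  ultimately show ?thesis by (simp add: path_homotopic_def)
qed

lemma path_homotopic_compose:
  assumes "continuous_map X Y f" "path_homotopic X p q"
  shows "path_homotopic Y (f \<circ> p) (f \<circ> q)"
  unfolding path_homotopic_def
  by (rule homotopic_with_compose_continuous_map_left[OF assms(2)[unfolded path_homotopic_def] assms(1)])
     auto

lemma join_path_0 [simp]: "join_path p q 0 = p 0"
  by (simp add: join_path_def)

lemma join_path_1 [simp]: "join_path p q 1 = q 1"
  by (simp add: join_path_def)

lemma rev_path_0 [simp]: "rev_path p 0 = p 1"
  by (simp add: rev_path_def)

lemma rev_path_1 [simp]: "rev_path p 1 = p 0"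
  by (simp add: rev_path_def)

lemma rev_path_rev_path [simp]: "rev_path (rev_path p) = p"
  by (simp add: rev_path_def)

lemma comp_join_path [simp]: "f \<circ> join_path p q = join_path (f \<circ> p) (f \<circ> q)"
  by (auto simp: join_path_def fun_eq_iff)

lemma comp_rev_path [simp]: "f \<circ> rev_path p = rev_path (f \<circ> p)"
  by (auto simp: rev_path_def fun_eq_iff)

lemma pathin_rev_path [simp]: "pathin X p \<Longrightarrow> pathin X (rev_path p)"
  unfolding pathin_def rev_path_def
  by (rule continuous_map_compose[where f="\<lambda>t. 1 - t" and g=p, unfolded o_def])
     (auto simp: continuous_map_in_subtopology intro!: continuous_intros)

lemma pathin_join_path [simp]:
  assumes "pathin X p" "pathin X q" "p 1 = q 0"
  shows "pathin X (join_path p q)"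
proof -
  let ?I = "top_of_set {0..1::real}"
  let ?j = "\<lambda>x. if x \<le> 1/2 then (p \<circ> (\<lambda>t. 2 * t)) x else (q \<circ> (\<lambda>t. 2 * t - 1)) x"
  have "continuous_map ?I X ?j"
  proof (intro continuous_map_cases_le continuous_map_compose, force, force)
    show "continuous_map (subtopology ?I {x \<in> topspace ?I. x \<le> 1/2}) ?I ((*) 2)"
      by (auto simp: continuous_map_in_subtopology continuous_map_from_subtopology)
    have "continuous_map (subtopology ?I {x. 0 \<le> x \<and> x \<le> 1 \<and> 1 \<le> x * 2}) euclideanreal
            (\<lambda>t. 2 * t - 1)"
      by (intro continuous_intros) (force intro: continuous_map_from_subtopology)
    then show "continuous_map (subtopology ?I {x \<in> topspace ?I. 1/2 \<le> x}) ?I (\<lambda>t. 2 * t - 1)"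
      by (force simp: continuous_map_in_subtopology)
  qed (use assms in \<open>auto simp: pathin_def algebra_simps\<close>)
  moreover have "?j = join_path p q"
    by (auto simp: fun_eq_iff join_path_def)
  ultimately show ?thesis
    by (simp add: pathin_def)
qed

lemma path_homotopic_compose_convex:
  fixes \<Phi> :: "'v::real_normed_vector \<Rightarrow> 'a"
  assumes S: "convex S" and \<Phi>: "continuous_map (top_of_set S) X \<Phi>"
    and \<sigma>: "continuous_on {0..1} \<sigma>" "\<sigma> ` {0..1} \<subseteq> S"
    and \<tau>: "continuous_on {0..1} \<tau>" "\<tau> ` {0..1} \<subseteq> S"
    and ends: "\<sigma> 0 = \<tau> 0" "\<sigma> 1 = \<tau> 1"
  shows "path_homotopic X (\<Phi> \<circ> \<sigma>) (\<Phi> \<circ> \<tau>)"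
proof -
  define g where "g = (\<lambda>z::real\<times>real. (1 - fst z) *\<^sub>R \<sigma> (snd z) + fst z *\<^sub>R \<tau> (snd z))"
  have "continuous_map (top_of_set ({0..1} \<times> {0..1})) (top_of_set S) g"
  proof -
    have "continuous_on ({0..1} \<times> {0..1}) g" unfolding g_def
      by (intro continuous_intros continuous_on_compose2[OF \<sigma>(1)] continuous_on_compose2[OF \<tau>(1)]) auto
    moreover have "g z \<in> S" if "z \<in> {0..1} \<times> {0..1}" for z
    proof -
      have "\<sigma> (snd z) \<in> S" "\<tau> (snd z) \<in> S" using that \<sigma>(2) \<tau>(2) by auto
      then show ?thesis using that S unfolding convex_alt g_def by (auto simp: algebra_simps)
    qed
    ultimately show ?thesis by auto
  qed
  from continuous_map_compose[OF this \<Phi>]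
  have "continuous_map (prod_topology (top_of_set {0..1}) (top_of_set {0..1})) X (\<lambda>z. \<Phi> (g z))"
    by (simp add: o_def)
  then show ?thesis
    unfolding path_homotopic_def homotopic_with_def
    by (intro exI[where x="\<lambda>z. \<Phi> (g z)"]) (simp add: g_def ends flip: scaleR_add_left)
qed

lemma path_homotopic_reparametrization:
  assumes p: "pathin X p"
    and \<phi>: "continuous_on {0..1} \<phi>" "\<And>t. t \<in> {0..1} \<Longrightarrow> \<phi> t \<in> {0..1}"
    and \<psi>: "continuous_on {0..1} \<psi>" "\<And>t. t \<in> {0..1} \<Longrightarrow> \<psi> t \<in> {0..1}"
    and ends: "\<phi> 0 = \<psi> 0" "\<phi> 1 = \<psi> 1"
    and g: "\<And>t. t \<in> {0..1} \<Longrightarrow> g t = p (\<phi> t)"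
    and h: "\<And>t. t \<in> {0..1} \<Longrightarrow> h t = p (\<psi> t)"
  shows "path_homotopic X g h"
proof -
  have "path_homotopic X (p \<circ> \<phi>) (p \<circ> \<psi>)"
    by (rule path_homotopic_compose_convex[where S="{0..1::real}"])
       (use assms in \<open>auto simp: pathin_def\<close>)
  then show ?thesis by (rule path_homotopic_cong) (auto simp: g h)
qed

lemma path_homotopic_const_join:
  "pathin X p \<Longrightarrow> path_homotopic X (join_path (\<lambda>_. p 0) p) p"
  by (rule path_homotopic_reparametrization[where \<phi>="\<lambda>t. max 0 (2*t-1)" and \<psi>="\<lambda>t. t"])
     (auto simp: join_path_def intro!: continuous_intros)

lemma path_homotopic_join_const:
  "pathin X p \<Longrightarrow> path_homotopic X (join_path p (\<lambda>_. p 1)) p"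
  by (rule path_homotopic_reparametrization[where \<phi>="\<lambda>t. min 1 (2*t)" and \<psi>="\<lambda>t. t"])
     (auto simp: join_path_def intro!: continuous_intros)

lemma path_homotopic_rev_join:
  "pathin X p \<Longrightarrow> path_homotopic X (join_path (rev_path p) p) (\<lambda>_. p 1)"
  by (rule path_homotopic_reparametrization[where \<phi>="\<lambda>t. \<bar>1-2*t\<bar>" and \<psi>="\<lambda>t. 1"])
     (auto simp: join_path_def rev_path_def intro!: continuous_intros)

lemma path_homotopic_join_assoc:
  assumes "pathin X p" "pathin X q" "pathin X r" "p 1 = q 0" "q 1 = r 0"
  shows "path_homotopic X (join_path (join_path p q) r) (join_path p (join_path q r))"
proof (rule path_homotopic_reparametrization[where p="join_path p (join_path q r)"
      and \<phi>="\<lambda>t. min (2*t) (min (t+1/4) ((t+1)/2))" and \<psi>="\<lambda>t. t"])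
  fix t :: real
  assume "t \<in> {0..1}"
  consider "t \<le> 1/4" | "1/4 < t" "t \<le> 1/2" | "1/2 < t" by linarith
  then show "join_path (join_path p q) r t = join_path p (join_path q r) (min (2*t) (min (t+1/4) ((t+1)/2)))"
  proof cases
    case 3
    then have "min (2*t) (min (t+1/4) ((t+1)/2)) = (t+1)/2" "2*((t+1)/2) - 1 = t"
      "(4 * t + 4) / 2 - 3 = 2*t - 1"
      by (auto simp: min_def field_simps)
    with 3 show ?thesis by (simp add: join_path_def)
  qed (auto simp: join_path_def min_def algebra_simps)
qed (use assms in \<open>auto intro!: continuous_intros simp: min_le_iff_disj\<close>)

lemma path_homotopic_rev_path:
  assumes "path_homotopic X p q"
  shows "path_homotopic X (rev_path p) (rev_path q)"
proof -
  have "homotopic_with (\<lambda>r. r 0 = p 1 \<and> r 1 = p 0) (top_of_set {0..1}) X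
          (p \<circ> (\<lambda>t. 1 - t)) (q \<circ> (\<lambda>t. 1 - t))"
    by (rule homotopic_with_compose_continuous_map_right[OF assms[unfolded path_homotopic_def]])
       (auto simp: continuous_map_in_subtopology intro!: continuous_intros)
  then show ?thesis by (simp add: path_homotopic_def rev_path_def o_def)
qed

lemma path_homotopic_join:
  assumes pp: "path_homotopic X p p'" and qq: "path_homotopic X q q'" and e: "p 1 = q 0"
  shows "path_homotopic X (join_path p q) (join_path p' q')"
proof -
  let ?I = "{0..1::real}"
  obtain H where cH: "continuous_map (top_of_set (?I \<times> ?I)) X H"
    and H0: "\<forall>x. H (0, x) = p x" and H1: "\<forall>x. H (1, x) = p' x"
    and HP: "\<forall>s\<in>?I. H (s, 0) = p 0 \<and> H (s, 1) = p 1"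
    using pp unfolding path_homotopic_def homotopic_with_def by auto
  obtain K where cK: "continuous_map (top_of_set (?I \<times> ?I)) X K"
    and K0: "\<forall>x. K (0, x) = q x" and K1: "\<forall>x. K (1, x) = q' x"
    and KP: "\<forall>s\<in>?I. K (s, 0) = q 0 \<and> K (s, 1) = q 1"
    using qq unfolding path_homotopic_def homotopic_with_def by auto
  define L where "L = (\<lambda>z::real\<times>real. if snd z \<le> 1/2 then (H \<circ> (\<lambda>z. (fst z, 2 * snd z))) z
                                        else (K \<circ> (\<lambda>z. (fst z, 2 * snd z - 1))) z)"
  let ?S = "top_of_set (?I \<times> ?I)"
  have "continuous_map ?S X L"
    unfolding L_def
  proof (rule continuous_map_cases_le)
    show "continuous_map (top_of_set (?I \<times> ?I)) euclideanreal snd"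
      by (simp add: continuous_on_snd[OF continuous_on_id])
    show "continuous_map (subtopology ?S {x \<in> topspace ?S. snd x \<le> 1/2}) X
            (H \<circ> (\<lambda>z. (fst z, 2 * snd z)))"
      by (rule continuous_map_compose[OF _ cH])
         (auto simp: subtopology_subtopology intro!: continuous_intros)
    show "continuous_map (subtopology ?S {x \<in> topspace ?S. 1/2 \<le> snd x}) X
            (K \<circ> (\<lambda>z. (fst z, 2 * snd z - 1)))"
      by (rule continuous_map_compose[OF _ cK])
         (auto simp: subtopology_subtopology intro!: continuous_intros)
  qed (use HP KP e in \<open>auto simp: algebra_simps\<close>)
  then show ?thesis
    unfolding path_homotopic_def homotopic_with_def
    by (intro exI[where x=L]) (use HP KP H0 H1 K0 K1 in \<open>auto simp: L_def join_path_def\<close>)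
qed

lemma path_homotopic_join_left:
  "path_homotopic X p p' \<Longrightarrow> pathin X q \<Longrightarrow> p 1 = q 0 \<Longrightarrow>
   path_homotopic X (join_path p q) (join_path p' q)"
  using path_homotopic_join path_homotopic_refl by blast

lemma path_homotopic_join_right:
  "path_homotopic X q q' \<Longrightarrow> pathin X p \<Longrightarrow> p 1 = q 0 \<Longrightarrow>
   path_homotopic X (join_path p q) (join_path p q')"
  using path_homotopic_join path_homotopic_refl by blast

lemma path_homotopic_rev_join_cancel:
  assumes "pathin X c" "pathin X p" "c 1 = p 0"
  shows "path_homotopic X (join_path (rev_path c) (join_path c p)) p"
proof -
  have "path_homotopic X (join_path (rev_path c) (join_path c p)) (join_path (join_path (rev_path c) c) p)"
    by (rule path_homotopic_sym[OF path_homotopic_join_assoc]) (use assms in auto)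
  also have "path_homotopic X \<dots> (join_path (\<lambda>_. c 1) p)"
    by (rule path_homotopic_join_left[OF path_homotopic_rev_join]) (use assms in auto)
  also have "path_homotopic X \<dots> p"
    using path_homotopic_const_join[OF assms(2)] assms(3) by simp
  finally show ?thesis .
qed

lemma path_homotopic_join_rev_cancel:
  assumes "pathin X c" "pathin X p" "p 1 = c 1"
  shows "path_homotopic X (join_path (join_path p (rev_path c)) c) p"
proof -
  have "path_homotopic X (join_path (join_path p (rev_path c)) c) (join_path p (join_path (rev_path c) c))"
    by (rule path_homotopic_join_assoc) (use assms in auto)
  also have "path_homotopic X \<dots> (join_path p (\<lambda>_. c 1))"
    by (rule path_homotopic_join_right[OF path_homotopic_rev_join]) (use assms in auto)
  also have "path_homotopic X \<dots> p"
    using path_homotopic_join_const[OF assms(2)] assms(3) by simp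
  finally show ?thesis .
qed

definition conj_path :: "(real \<Rightarrow> 'a) \<Rightarrow> (real \<Rightarrow> 'a) \<Rightarrow> real \<Rightarrow> 'a" where
  "conj_path p \<alpha> = join_path (rev_path p) (join_path \<alpha> p)"

lemma comp_conj_path [simp]: "f \<circ> conj_path p \<alpha> = conj_path (f \<circ> p) (f \<circ> \<alpha>)"
  by (simp add: conj_path_def)

lemma loopin_conj_path:
  "pathin X p \<Longrightarrow> loopin X (p 0) \<alpha> \<Longrightarrow> loopin X (p 1) (conj_path p \<alpha>)"
  by (simp add: loopin_def conj_path_def)

lemma path_homotopic_conj_path:
  assumes "path_homotopic X p p'" "path_homotopic X \<alpha> \<alpha>'" "\<alpha> 0 = p 0" "\<alpha> 1 = p 0"
  shows "path_homotopic X (conj_path p \<alpha>) (conj_path p' \<alpha>')"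
  unfolding conj_path_def
  by (intro path_homotopic_join path_homotopic_rev_path assms) (simp_all add: assms)

lemma path_homotopic_conj_path_cancel:
  assumes c: "pathin X c" and \<alpha>: "loopin X (c 0) \<alpha>"
  shows "path_homotopic X (conj_path (rev_path c) (conj_path c \<alpha>)) \<alpha>"
proof -
  have a: "pathin X \<alpha>" "\<alpha> 0 = c 0" "\<alpha> 1 = c 0"
    using \<alpha> by (auto simp: loopin_def)
  define r where "r = join_path (join_path \<alpha> c) (rev_path c)"
  have r: "pathin X r" "r 0 = c 0"
    using a c by (auto simp: r_def)
  have "path_homotopic X (conj_path (rev_path c) (conj_path c \<alpha>)) (join_path c (join_path (rev_path c) r))"
    unfolding r_def conj_path_def rev_path_rev_path
    by (rule path_homotopic_join_right[OF path_homotopic_join_assoc]) (use a c in auto)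
  also have "path_homotopic X \<dots> r"
    using path_homotopic_rev_join_cancel[of X "rev_path c" r] r c by simp
  also have "path_homotopic X \<dots> \<alpha>"
    using path_homotopic_join_rev_cancel[of X "rev_path c" \<alpha>] a c by (simp add: r_def)
  finally show ?thesis .
qed

lemma path_homotopic_conj_path_iff:
  assumes c: "pathin X c" and u: "loopin X (c 0) u" and v: "loopin X (c 0) v"
  shows "path_homotopic X (conj_path c u) (conj_path c v) \<longleftrightarrow> path_homotopic X u v"
proof
  assume uv: "path_homotopic X (conj_path c u) (conj_path c v)"
  have "path_homotopic X (conj_path (rev_path c) (conj_path c u)) (conj_path (rev_path c) (conj_path c v))"
    by (rule path_homotopic_conj_path[OF path_homotopic_refl uv])
       (use c u in \<open>auto simp: loopin_def conj_path_def\<close>)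
  then show "path_homotopic X u v"
    using path_homotopic_conj_path_cancel[OF c u] path_homotopic_conj_path_cancel[OF c v]
    by (blast intro: path_homotopic_sym path_homotopic_trans)
next
  assume "path_homotopic X u v"
  then show "path_homotopic X (conj_path c u) (conj_path c v)"
    by (rule path_homotopic_conj_path[OF path_homotopic_refl[OF c]])
       (use u in \<open>auto simp: loopin_def\<close>)
qed

lemma pathin_homotopy_track:
  assumes "continuous_map (prod_topology (top_of_set {0..1}) X) Z H" "x \<in> topspace X"
  shows "pathin Z (\<lambda>s. H (s, x))"
proof -
  have "continuous_map (top_of_set {0..1}) (prod_topology (top_of_set {0..1}) X) (\<lambda>s. (s, x))"
    using assms(2) by (intro continuous_map_pairedI) (auto simp: continuous_map_in_subtopology)
  from continuous_map_compose[OF this assms(1)] show ?thesis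
    by (simp add: pathin_def o_def)
qed

lemma path_homotopic_homotopy_square:
  assumes H: "continuous_map (prod_topology (top_of_set {0..1}) X) Z H"
    and H0: "\<And>x. H (0, x) = F x" and H1: "\<And>x. H (1, x) = G x" and \<alpha>: "pathin X \<alpha>"
  shows "path_homotopic Z (join_path (F \<circ> \<alpha>) (\<lambda>s. H (s, \<alpha> 1))) (join_path (\<lambda>s. H (s, \<alpha> 0)) (G \<circ> \<alpha>))"
proof -
  let ?I = "{0..1::real}"
  define \<Phi> where "\<Phi> = (\<lambda>z::real\<times>real. H (fst z, \<alpha> (snd z)))"
  \<comment> \<open>Both sides are \<open>\<Phi>\<close> along the two boundary routes of the unit square from (0,0) to (1,1).\<close>
  define \<sigma> where "\<sigma> = (\<lambda>t::real. (max 0 (2*t-1), min 1 (2*t)))"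
  define \<tau> where "\<tau> = (\<lambda>t::real. (min 1 (2*t), max 0 (2*t-1)))"
  have "continuous_map (top_of_set (?I \<times> ?I)) (prod_topology (top_of_set ?I) X) (\<lambda>z. (fst z, \<alpha> (snd z)))"
  proof (intro continuous_map_pairedI)
    show "continuous_map (top_of_set (?I \<times> ?I)) (top_of_set ?I) fst"
      by (auto simp: continuous_on_fst[OF continuous_on_id])
    have "continuous_map (top_of_set (?I \<times> ?I)) (top_of_set ?I) snd"
      by (auto simp: continuous_on_snd[OF continuous_on_id])
    from continuous_map_compose[OF this \<alpha>[unfolded pathin_def]]
    show "continuous_map (top_of_set (?I \<times> ?I)) X (\<lambda>z. \<alpha> (snd z))"
      by (simp add: o_def)
  qed
  from continuous_map_compose[OF this H]
  have "continuous_map (top_of_set (?I \<times> ?I)) Z \<Phi>"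
    by (simp add: \<Phi>_def o_def)
  then have "path_homotopic Z (\<Phi> \<circ> \<sigma>) (\<Phi> \<circ> \<tau>)"
    by (rule path_homotopic_compose_convex[OF convex_Times[OF convex_real_interval(5) convex_real_interval(5)]])
       (auto simp: \<sigma>_def \<tau>_def intro!: continuous_intros)
  then show ?thesis
    by (rule path_homotopic_cong) (auto simp: \<Phi>_def \<sigma>_def \<tau>_def join_path_def H0 H1)
qed

lemma path_homotopic_homotopy_conj_path:
  assumes H: "continuous_map (prod_topology (top_of_set {0..1}) X) Z H"
    and H0: "\<And>x. H (0, x) = F x" and H1: "\<And>x. H (1, x) = G x" and \<alpha>: "loopin X x \<alpha>"
  shows "path_homotopic Z (G \<circ> \<alpha>) (conj_path (\<lambda>s. H (s, x)) (F \<circ> \<alpha>))"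
proof -
  have a: "pathin X \<alpha>" "\<alpha> 0 = x" "\<alpha> 1 = x"
    using \<alpha> by (auto simp: loopin_def)
  let ?c = "\<lambda>s. H (s, x)"
  have c: "pathin Z ?c"
    using pathin_homotopy_track[OF H path_start_in_topspace[OF a(1)]] a by simp
  have "homotopic_with (\<lambda>_. True) X Z F G"
    unfolding homotopic_with_def using H H0 H1 by blast
  then have Fa: "pathin Z (F \<circ> \<alpha>)" and Ga: "pathin Z (G \<circ> \<alpha>)"
    using homotopic_with_imp_continuous_maps a(1) pathin_compose by blast+
  have "path_homotopic Z (join_path (F \<circ> \<alpha>) ?c) (join_path ?c (G \<circ> \<alpha>))"
    using path_homotopic_homotopy_square[OF H H0 H1 a(1)] a by simp
  then have "path_homotopic Z (conj_path ?c (F \<circ> \<alpha>)) (join_path (rev_path ?c) (join_path ?c (G \<circ> \<alpha>)))"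
    unfolding conj_path_def
    by (rule path_homotopic_join_right)
       (use a c H0 in auto)
  also have "path_homotopic Z \<dots> (G \<circ> \<alpha>)"
    by (rule path_homotopic_rev_join_cancel) (use a c Ga H1 in auto)
  finally show ?thesis
    by (rule path_homotopic_sym)
qed

lemma pi1_iso_induced_change_basepoint:
  assumes f: "continuous_map X Y f" and c: "pathin X c" and iso: "pi1_iso_induced X Y f (c 0)"
  shows "pi1_iso_induced X Y f (c 1)"
proof -
  have fc: "pathin Y (f \<circ> c)"
    using c f by (rule pathin_compose)
  show ?thesis
    unfolding pi1_iso_induced_def
  proof (intro conjI allI impI)
    fix \<alpha> \<beta>
    assume "loopin X (c 1) \<alpha> \<and> loopin X (c 1) \<beta> \<and> path_homotopic Y (f \<circ> \<alpha>) (f \<circ> \<beta>)"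
    then have \<alpha>: "loopin X ((rev_path c) 0) \<alpha>" and \<beta>: "loopin X ((rev_path c) 0) \<beta>"
      and f\<alpha>\<beta>: "path_homotopic Y (f \<circ> \<alpha>) (f \<circ> \<beta>)"
      by auto
    have "path_homotopic Y (f \<circ> conj_path (rev_path c) \<alpha>) (f \<circ> conj_path (rev_path c) \<beta>)"
      using path_homotopic_conj_path_iff[of Y "rev_path (f \<circ> c)" "f \<circ> \<alpha>" "f \<circ> \<beta>"] f\<alpha>\<beta> fc \<alpha> \<beta> f
      by (auto simp: loopin_def pathin_compose)
    moreover have "loopin X (c 0) (conj_path (rev_path c) \<alpha>)" "loopin X (c 0) (conj_path (rev_path c) \<beta>)"
      using loopin_conj_path[OF pathin_rev_path[OF c]] \<alpha> \<beta> by auto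
    ultimately have "path_homotopic X (conj_path (rev_path c) \<alpha>) (conj_path (rev_path c) \<beta>)"
      using iso unfolding pi1_iso_induced_def by blast
    then show "path_homotopic X \<alpha> \<beta>"
      using path_homotopic_conj_path_iff[OF pathin_rev_path[OF c] \<alpha> \<beta>] by blast
  next
    fix \<gamma>
    assume \<gamma>: "loopin Y (f (c 1)) \<gamma>"
    then have "loopin Y (f (c 0)) (conj_path (rev_path (f \<circ> c)) \<gamma>)"
      using loopin_conj_path[OF pathin_rev_path[OF fc]] by simp
    then obtain p where p: "loopin X (c 0) p"
      and fp: "path_homotopic Y (f \<circ> p) (conj_path (rev_path (f \<circ> c)) \<gamma>)"
      using iso unfolding pi1_iso_induced_def by blast
    have "path_homotopic Y (f \<circ> conj_path c p) (conj_path (f \<circ> c) (conj_path (rev_path (f \<circ> c)) \<gamma>))"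
      using path_homotopic_conj_path[OF path_homotopic_refl[OF fc] fp] p by (simp add: loopin_def)
    also have "path_homotopic Y \<dots> \<gamma>"
      using path_homotopic_conj_path_cancel[of Y "rev_path (f \<circ> c)" \<gamma>] fc \<gamma> by simp
    finally show "\<exists>p. loopin X (c 1) p \<and> path_homotopic Y (f \<circ> p) \<gamma>"
      using loopin_conj_path[OF c p] by blast
  qed
qed

lemma pi1_iso_induced_lift_path:
  assumes f: "continuous_map X Y f" and d: "pathin X d" and iso: "pi1_iso_induced X Y f (d 0)"
    and q: "pathin Y q" "q 0 = f (d 0)" "q 1 = f (d 1)"
  shows "\<exists>p. pathin X p \<and> p 0 = d 0 \<and> p 1 = d 1 \<and> path_homotopic Y (f \<circ> p) q"
proof -
  have fd: "pathin Y (f \<circ> d)"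
    using d f by (rule pathin_compose)
  have "loopin Y (f (d 0)) (join_path q (rev_path (f \<circ> d)))"
    using q fd by (simp add: loopin_def)
  then obtain p where p: "loopin X (d 0) p"
    and fp: "path_homotopic Y (f \<circ> p) (join_path q (rev_path (f \<circ> d)))"
    using iso unfolding pi1_iso_induced_def by blast
  have "path_homotopic Y (f \<circ> join_path p d) (join_path (join_path q (rev_path (f \<circ> d))) (f \<circ> d))"
    using path_homotopic_join_left[OF fp fd] p by (simp add: loopin_def)
  also have "path_homotopic Y \<dots> q"
    by (rule path_homotopic_join_rev_cancel) (use fd q in auto)
  finally show ?thesis
    using p d by (intro exI[where x="join_path p d"]) (auto simp: loopin_def)
qed

lemma diag_good_preimage:
  assumes f: "continuous_map X Y f" and X: "path_connected_space X"
    and iso: "\<And>x. x \<in> topspace X \<Longrightarrow> pi1_iso_induced X Y f x" and V: "diag_good Y V"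
  shows "diag_good X {u \<in> topspace (prod_topology X X). map_prod f f u \<in> V}" (is "diag_good X ?U")
  unfolding diag_good_def conj_path_def[symmetric]
proof
  fix u
  assume "u \<in> ?U"
  then obtain a b where u: "u = (a, b)" and a: "a \<in> topspace X" and b: "b \<in> topspace X"
    and fu: "(f a, f b) \<in> V"
    by auto
  obtain q where q: "pathin Y q" "q 0 = f a" "q 1 = f b"
    and q_conj: "\<And>\<gamma>. loopin (subtopology (prod_topology Y Y) V) (f a, f b) \<gamma> \<Longrightarrow>
                   path_homotopic Y (snd \<circ> \<gamma>) (conj_path q (fst \<circ> \<gamma>))"
    using V fu unfolding diag_good_def conj_path_def[symmetric] by fastforce
  obtain d where d: "pathin X d" "d 0 = a" "d 1 = b"
    using X a b unfolding path_connected_space_def by blast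
  obtain p where p: "pathin X p" "p 0 = a" "p 1 = b" and pq: "path_homotopic Y (f \<circ> p) q"
    using pi1_iso_induced_lift_path[OF f d(1)] iso[OF a] q d by auto
  have ff: "continuous_map (subtopology (prod_topology X X) ?U) (subtopology (prod_topology Y Y) V) (map_prod f f)"
    using f by (auto simp: continuous_map_in_subtopology continuous_map_from_subtopology
                           map_prod_def continuous_map_prod_top)
  show "\<exists>p. pathin X p \<and> p 0 = fst u \<and> p 1 = snd u \<and>
          (\<forall>\<gamma>. loopin (subtopology (prod_topology X X) ?U) u \<gamma> \<longrightarrow>
                path_homotopic X (snd \<circ> \<gamma>) (conj_path p (fst \<circ> \<gamma>)))"
  proof (intro exI conjI allI impI)
    fix \<gamma>
    assume \<gamma>: "loopin (subtopology (prod_topology X X) ?U) u \<gamma>"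
    then have "pathin (prod_topology X X) \<gamma>"
      by (auto simp: loopin_def pathin_subtopology)
    then have \<gamma>1: "loopin X a (fst \<circ> \<gamma>)" and \<gamma>2: "loopin X b (snd \<circ> \<gamma>)"
      using \<gamma> u by (auto simp: loopin_def intro: pathin_compose continuous_map_fst continuous_map_snd)
    have "loopin (subtopology (prod_topology Y Y) V) (f a, f b) (map_prod f f \<circ> \<gamma>)"
      using \<gamma> u ff by (auto simp: loopin_def pathin_compose)
    from q_conj[OF this]
    have "path_homotopic Y (f \<circ> (snd \<circ> \<gamma>)) (conj_path q (f \<circ> (fst \<circ> \<gamma>)))"
      by (simp add: o_def map_prod_def case_prod_unfold)
    also have "path_homotopic Y \<dots> (f \<circ> conj_path p (fst \<circ> \<gamma>))"
      using path_homotopic_conj_path[OF path_homotopic_sym[OF pq] path_homotopic_refl] \<gamma>1 f q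
      by (auto simp: loopin_def pathin_compose)
    finally have "path_homotopic Y (f \<circ> (snd \<circ> \<gamma>)) (f \<circ> conj_path p (fst \<circ> \<gamma>))" .
    moreover have "loopin X b (conj_path p (fst \<circ> \<gamma>))"
      using loopin_conj_path[OF p(1)] \<gamma>1 p by simp
    ultimately show "path_homotopic X (snd \<circ> \<gamma>) (conj_path p (fst \<circ> \<gamma>))"
      using iso[OF b] \<gamma>2 unfolding pi1_iso_induced_def by blast
  qed (use p u in auto)
qed

lemma TCD_le_TCD_if_preimage_diag_good:
  assumes f: "continuous_map X Y f"
    and good: "\<And>V. diag_good Y V \<Longrightarrow> diag_good X {u \<in> topspace (prod_topology X X). map_prod f f u \<in> V}"
  shows "TCD X \<le> TCD Y"
  unfolding TCD_def
proof (rule INF_superset_mono, intro subsetI CollectI, elim CollectE exE conjE)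
  fix k :: nat and V :: "nat \<Rightarrow> ('b \<times> 'b) set"
  assume V: "\<forall>i\<le>k. openin (prod_topology Y Y) (V i) \<and> diag_good Y (V i)"
    and cover: "(\<Union>i\<le>k. V i) = topspace (prod_topology Y Y)"
  have ff: "continuous_map (prod_topology X X) (prod_topology Y Y) (map_prod f f)"
    using f by (simp add: map_prod_def continuous_map_prod_top)
  define U where "U i = {u \<in> topspace (prod_topology X X). map_prod f f u \<in> V i}" for i
  have "openin (prod_topology X X) (U i) \<and> diag_good X (U i)" if "i \<le> k" for i
    using V that openin_continuous_map_preimage[OF ff] good unfolding U_def by blast
  moreover have "(\<Union>i\<le>k. U i) = topspace (prod_topology X X)"
    using cover continuous_map_image_subset_topspace[OF ff] by (fastforce simp: U_def)
  ultimately show "\<exists>U :: nat \<Rightarrow> ('a \<times> 'a) set.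
       (\<forall>i\<le>k. openin (prod_topology X X) (U i) \<and> diag_good X (U i)) \<and>
       (\<Union>i\<le>k. U i) = topspace (prod_topology X X)"
    by blast
qed simp

lemma TCD_le_TCD_if_pi1_iso_induced:
  assumes X: "path_connected_space X" and f: "continuous_map X Y f" and x0: "x0 \<in> topspace X"
    and iso: "pi1_iso_induced X Y f x0"
  shows "TCD X \<le> TCD Y"
proof (rule TCD_le_TCD_if_preimage_diag_good[OF f diag_good_preimage[OF f X]])
  fix x
  assume "x \<in> topspace X"
  then obtain c where "pathin X c" "c 0 = x0" "c 1 = x"
    using X x0 unfolding path_connected_space_def by blast
  then show "pi1_iso_induced X Y f x"
    using pi1_iso_induced_change_basepoint[OF f] iso by blast
qed

lemma TCD_trivial_topology: "TCD trivial_topology = 0"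
proof -
  have "TCD (trivial_topology :: 'a topology) \<le> enat 0"
    unfolding TCD_def
    by (rule INF_lower) (auto intro!: exI[where x="\<lambda>_. {}"] simp: diag_good_def)
  then show ?thesis
    by (simp add: zero_enat_def[symmetric])
qed

lemma path_homotopic_if_left_homotopy_inverse:
  assumes f: "continuous_map X Y f" and g: "continuous_map Y X g"
    and gf: "homotopic_with (\<lambda>_. True) X X (g \<circ> f) id"
    and p: "loopin X x p" and q: "loopin X x q" and fpq: "path_homotopic Y (f \<circ> p) (f \<circ> q)"
  shows "path_homotopic X p q"
proof -
  obtain H :: "real \<times> 'a \<Rightarrow> 'a" where H: "continuous_map (prod_topology (top_of_set {0..1}) X) X H"
    and H0: "\<And>x. H (0, x) = g (f x)" and H1: "\<And>x. H (1, x) = x"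
    using gf unfolding homotopic_with_def comp_def id_def by blast
  let ?c = "\<lambda>s. H (s, x)"
  have c: "pathin X ?c" "?c 0 = g (f x)"
    using pathin_homotopy_track[OF H path_start_in_topspace] p H0 by (auto simp: loopin_def)
  have "path_homotopic X (g \<circ> f \<circ> p) (g \<circ> f \<circ> q)"
    using path_homotopic_compose[OF g fpq] by (simp add: o_assoc)
  then have "path_homotopic X (conj_path ?c (g \<circ> f \<circ> p)) (conj_path ?c (g \<circ> f \<circ> q))"
    using path_homotopic_conj_path_iff[OF c(1)] p q continuous_map_compose[OF f g] c(2)
    by (auto simp: loopin_def pathin_compose)
  moreover have "path_homotopic X r (conj_path ?c (g \<circ> f \<circ> r))" if "loopin X x r" for r
    using path_homotopic_homotopy_conj_path[of X X H "g \<circ> f" id, OF H _ _ that] H0 H1 by simp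
  ultimately show ?thesis
    using p q by (meson path_homotopic_sym path_homotopic_trans)
qed

lemma pi1_iso_induced_if_homotopy_equivalence:
  assumes f: "continuous_map X Y f" and g: "continuous_map Y X g"
    and gf: "homotopic_with (\<lambda>_. True) X X (g \<circ> f) id"
    and fg: "homotopic_with (\<lambda>_. True) Y Y (f \<circ> g) id" and x: "x \<in> topspace X"
  shows "pi1_iso_induced X Y f x"
  unfolding pi1_iso_induced_def
proof (intro conjI allI impI)
  fix p q
  assume "loopin X x p \<and> loopin X x q \<and> path_homotopic Y (f \<circ> p) (f \<circ> q)"
  then show "path_homotopic X p q"
    using path_homotopic_if_left_homotopy_inverse[OF f g gf] by blast
next
  fix \<beta>
  assume \<beta>: "loopin Y (f x) \<beta>"
  obtain H :: "real \<times> 'a \<Rightarrow> 'a" where H: "continuous_map (prod_topology (top_of_set {0..1}) X) X H"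
    and H0: "\<And>x. H (0, x) = g (f x)" and H1: "\<And>x. H (1, x) = x"
    using gf unfolding homotopic_with_def comp_def id_def by blast
  let ?c = "\<lambda>s. H (s, x)"
  have c: "pathin X ?c" "?c 0 = g (f x)" "?c 1 = x"
    using pathin_homotopy_track[OF H x] H0 H1 by auto
  have g\<beta>: "loopin X (?c 0) (g \<circ> \<beta>)"
    using \<beta> g c by (auto simp: loopin_def pathin_compose)
  define \<alpha> where "\<alpha> = conj_path ?c (g \<circ> \<beta>)"
  have \<alpha>: "loopin X x \<alpha>"
    using loopin_conj_path[OF c(1) g\<beta>] unfolding \<alpha>_def c(3) .
  have f\<alpha>: "loopin Y (f x) (f \<circ> \<alpha>)"
    using \<alpha> f by (auto simp: loopin_def pathin_compose)
  have "path_homotopic X (conj_path ?c (g \<circ> f \<circ> \<alpha>)) (conj_path ?c (g \<circ> \<beta>))"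
    using path_homotopic_homotopy_conj_path[of X X H "g \<circ> f" id, OF H _ _ \<alpha>] H0 H1
    by (auto simp: \<alpha>_def intro: path_homotopic_sym)
  moreover have "loopin X (?c 0) (g \<circ> f \<circ> \<alpha>)"
    using \<alpha> c pathin_compose[OF _ continuous_map_compose[OF f g]] by (auto simp: loopin_def)
  ultimately have "path_homotopic X (g \<circ> f \<circ> \<alpha>) (g \<circ> \<beta>)"
    using path_homotopic_conj_path_iff[OF c(1) _ g\<beta>] by blast
  then have "path_homotopic X (g \<circ> (f \<circ> \<alpha>)) (g \<circ> \<beta>)"
    by (simp only: o_assoc)
  then have "path_homotopic Y (f \<circ> \<alpha>) \<beta>"
    by (rule path_homotopic_if_left_homotopy_inverse[OF g f fg f\<alpha> \<beta>])
  with \<alpha> show "\<exists>p. loopin X x p \<and> path_homotopic Y (f \<circ> p) \<beta>"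
    by blast
qed

lemma TCD_eq_if_homotopy_equivalent_space:
  assumes X: "path_connected_space X" and Y: "path_connected_space Y"
    and XY: "X homotopy_equivalent_space Y"
  shows "TCD X = TCD Y"
proof -
  obtain f g where f: "continuous_map X Y f" and g: "continuous_map Y X g"
    and gf: "homotopic_with (\<lambda>_. True) X X (g \<circ> f) id"
    and fg: "homotopic_with (\<lambda>_. True) Y Y (f \<circ> g) id"
    using XY unfolding homotopy_equivalent_space_def by blast
  show ?thesis
  proof (cases "topspace X = {}")
    case True
    then have "X = trivial_topology" "Y = trivial_topology"
      using g by simp_all
    then show ?thesis
      by (simp add: TCD_trivial_topology)
  next
    case False
    then obtain x where x: "x \<in> topspace X"
      by blast
    then have fx: "f x \<in> topspace Y"
      using continuous_map_image_subset_topspace[OF f] by blast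
    show ?thesis
      using TCD_le_TCD_if_pi1_iso_induced[OF X f x pi1_iso_induced_if_homotopy_equivalence[OF f g gf fg x]]
        TCD_le_TCD_if_pi1_iso_induced[OF Y g fx pi1_iso_induced_if_homotopy_equivalence[OF g f fg gf fx]]
      by (rule order.antisym)
  qed
qed

theorem mainTheorem5:
  shows "(\<forall>(X :: 'a topology) (Y :: 'b topology) f x0.
            path_connected_space X \<and> path_connected_space Y \<and> continuous_map X Y f \<and>
            x0 \<in> topspace X \<and> pi1_iso_induced X Y f x0
            \<longrightarrow> TCD X \<le> TCD Y) \<and>
         (\<forall>(X :: 'a topology) (Y :: 'b topology).
            path_connected_space X \<and> path_connected_space Y \<and> X homotopy_equivalent_space Y
            \<longrightarrow> TCD X = TCD Y)"
proof (intro conjI allI impI)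
  fix X :: "'a topology" and Y :: "'b topology" and f x0
  assume "path_connected_space X \<and> path_connected_space Y \<and> continuous_map X Y f \<and>
            x0 \<in> topspace X \<and> pi1_iso_induced X Y f x0"
  then show "TCD X \<le> TCD Y"
    by (meson TCD_le_TCD_if_pi1_iso_induced)
next
  fix X :: "'a topology" and Y :: "'b topology"
  assume "path_connected_space X \<and> path_connected_space Y \<and> X homotopy_equivalent_space Y"
  then show "TCD X = TCD Y"
    by (meson TCD_eq_if_homotopy_equivalent_space)
qed

end
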